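(* Let $\Phi$ be a Young function, $\varphi\in\mathcal{G}^{\rm dec}_1$, and let $\psi:\mathbb{R}^n\to\mathbb{R}^n$ be measurable. Then $C_\psi$ is bounded on the weak Orlicz–Morrey space $\mathrm{w}\mathcal{M}_\Phi^\varphi(\mathbb{R}^n)$ if and only if there exists a constant $K>0$ such that for all measurable sets $A\subset\mathbb{R}^n$, \[ \|\chi_{\psi^{-1}(A)}\|_{\mathcal{M}_\Phi^\varphi}\le K\|\chi_A\|_{\mathcal{M}_\Phi^\varphi}. \]
   Context: A Young function is a convex $\Phi:[0,\infty)\to[0,\infty)$ with $\Phi(0)=0$, $\lim_{t\to\infty}\Phi(t)=\infty$. $\mathcal{G}^{\rm dec}_1$ is the set of $\varphi:(0,\infty)\to(0,\infty)$ that are almost decreasing (there is $C>0$ with $C\varphi(r)\ge\varphi(s)$ for $r<s$) and submultiplicative (there is $C>0$ with $\varphi(rs)\le C\varphi(r)\varphi(s)$). For a ball $B=B(a,r)$: $\|f\|_{\Phi,B}=\inf\{\lambda>0:\frac1{|B|}\int_B\Phi(|f|/\lambda)\le1\}$ and $\|f\|_{\mathcal{M}_\Phi^\varphi}=\sup_{a,r}\frac1{\varphi(r)}\|f\|_{\Phi,B(a,r)}$. For measurable $A$, $f$ and $t>0$, $m(A,f,t)=|\{x\in A:|f(x)|>t\}|$. Define $\|f\|_{\Phi,B,\mathrm{weak}}=\inf\{\lambda>0:\sup_{t>0}\frac1{|B|}\Phi(t)\,m(B,f/\lambda,t)\le1\}$ and $\mathrm{w}\mathcal{M}_\Phi^\varphi(\mathbb{R}^n)$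 as the set of measurable $f$ with $\|f\|_{\mathrm{w}\mathcal{M}_\Phi^\varphi}=\sup_{a\in\mathbb{R}^n,r>0}\frac1{\varphi(r)}\|f\|_{\Phi,B(a,r),\mathrm{weak}}<\infty$. $\chi_A$ is the characteristic function of $A$ and $C_\psi f=f\circ\psi$. *)

theory Defs
  imports "HOL-Analysis.Analysis"
begin

definition young_function :: "(real \<Rightarrow> real) \<Rightarrow> bool" where
  "young_function \<Phi> \<longleftrightarrow> convex_on {0..} \<Phi> \<and> \<Phi> 0 = 0 \<and> (\<forall>t\<ge>0. \<Phi> t \<ge> 0)
     \<and> filterlim \<Phi> at_top at_top"

definition G_dec_1 :: "(real \<Rightarrow> real) \<Rightarrow> bool" where
  "G_dec_1 \<phi> \<longleftrightarrow> (\<forall>r>0. \<phi> r > 0)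
     \<and> (\<exists>C>0. \<forall>r s. 0 < r \<longrightarrow> r < s \<longrightarrow> C * \<phi> r \<ge> \<phi> s)
     \<and> (\<exists>C>0. \<forall>r s. 0 < r \<longrightarrow> 0 < s \<longrightarrow> \<phi> (r * s) \<le> C * \<phi> r * \<phi> s)"

text \<open>Luxemburg-type norm on a set B (values in [0,oo]; Inf of the empty set is oo).\<close>
definition orlicz_norm_on :: "(real \<Rightarrow> real) \<Rightarrow> ('a::euclidean_space) set \<Rightarrow> ('a \<Rightarrow> real) \<Rightarrow> ennreal" where
  "orlicz_norm_on \<Phi> B f = Inf {ennreal l | l. l > 0 \<and>
      (\<integral>\<^sup>+ x\<in>B. ennreal (\<Phi> (\<bar>f x\<bar> / l)) \<partial>lebesgue) / emeasure lebesgue B \<le> 1}"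

definition distr_m :: "('a::euclidean_space) set \<Rightarrow> ('a \<Rightarrow> real) \<Rightarrow> real \<Rightarrow> ennreal" where
  "distr_m A f t = emeasure lebesgue {x\<in>A. \<bar>f x\<bar> > t}"

definition weak_orlicz_norm_on :: "(real \<Rightarrow> real) \<Rightarrow> ('a::euclidean_space) set \<Rightarrow> ('a \<Rightarrow> real) \<Rightarrow> ennreal" where
  "weak_orlicz_norm_on \<Phi> B f = Inf {ennreal l | l. l > 0 \<and>
      (SUP t\<in>{0<..}. ennreal (\<Phi> t) * distr_m B (\<lambda>x. f x / l) t / emeasure lebesgue B) \<le> 1}"

definition orlicz_morrey_norm :: "(real \<Rightarrow> real) \<Rightarrow> (real \<Rightarrow> real) \<Rightarrow> ('a::euclidean_space \<Rightarrow> real) \<Rightarrow> ennreal" where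
  "orlicz_morrey_norm \<Phi> \<phi> f = (SUP (a, r)\<in>UNIV \<times> {0<..}. orlicz_norm_on \<Phi> (ball a r) f / ennreal (\<phi> r))"

definition weak_orlicz_morrey_norm :: "(real \<Rightarrow> real) \<Rightarrow> (real \<Rightarrow> real) \<Rightarrow> ('a::euclidean_space \<Rightarrow> real) \<Rightarrow> ennreal" where
  "weak_orlicz_morrey_norm \<Phi> \<phi> f = (SUP (a, r)\<in>UNIV \<times> {0<..}. weak_orlicz_norm_on \<Phi> (ball a r) f / ennreal (\<phi> r))"

definition weak_orlicz_morrey :: "(real \<Rightarrow> real) \<Rightarrow> (real \<Rightarrow> real) \<Rightarrow> ('a::euclidean_space \<Rightarrow> real) set" where
  "weak_orlicz_morrey \<Phi> \<phi> = {f. f \<in> borel_measurable lebesgue \<and> weak_orlicz_morrey_norm \<Phi> \<phi> f < \<infinity>}"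

definition comp_bounded_weak_OM :: "(real \<Rightarrow> real) \<Rightarrow> (real \<Rightarrow> real) \<Rightarrow> ('a::euclidean_space \<Rightarrow> 'a) \<Rightarrow> bool" where
  "comp_bounded_weak_OM \<Phi> \<phi> \<psi> \<longleftrightarrow> (\<exists>C>0. \<forall>f \<in> weak_orlicz_morrey \<Phi> \<phi>.
      f \<circ> \<psi> \<in> weak_orlicz_morrey \<Phi> \<phi> \<and>
      weak_orlicz_morrey_norm \<Phi> \<phi> (f \<circ> \<psi>) \<le> ennreal C * weak_orlicz_morrey_norm \<Phi> \<phi> f)"

end

theory Submission
  imports Defs
begin

(*
  The weak Orlicz norm on a ball B is a supremum over level sets,
    ||f||_{Phi,B,weak} = sup_{s>0} s ||chi_{|f|>s}||_{Phi,B}: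
  after the substitution t = s/lambda, the weak-type condition at height t for f/lambda
  is the Luxemburg condition for s chi_{|f|>s} at lambda, and since each of these
  conditions is up-closed in lambda, the infimum over their intersection is the
  supremum of the individual infima. Taking suprema over balls gives the same formula
  for the weak Orlicz-Morrey norm, which therefore coincides with the Orlicz-Morrey norm
  on characteristic functions. As {|f o psi| > s} = psi^-1 {|f| > s}, boundedness of
  C_psi is equivalent to the estimate for characteristic functions, with the same
  constant.
*)

lemma young_function_mono:
  assumes "young_function \<Phi>" "0 \<le> a" "a \<le> b"
  shows "\<Phi> a \<le> \<Phi> b"
proof (cases "b = 0")
  case True
  then show ?thesis using assms by simp
next
  case False
  have convex: "convex_on {0..} \<Phi>" and "\<Phi> 0 = 0" and "\<Phi> b \<ge> 0"
    using assms unfolding young_function_def by auto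
  define t where "t = a / b"
  have b: "b > 0" using False assms by simp
  have t: "0 \<le> t" "t \<le> 1" using assms b by (auto simp: t_def field_simps)
  have "\<Phi> ((1 - t) *\<^sub>R 0 + t *\<^sub>R b) \<le> (1 - t) * \<Phi> 0 + t * \<Phi> b"
    using convex_onD[OF convex, of t 0 b] t b by auto
  also have "(1 - t) *\<^sub>R 0 + t *\<^sub>R b = a" using b by (simp add: t_def)
  finally have "\<Phi> a \<le> t * \<Phi> b" using \<open>\<Phi> 0 = 0\<close> by simp
  also have "\<dots> \<le> \<Phi> b" using t \<open>\<Phi> b \<ge> 0\<close> by (simp add: mult_left_le_one_le)
  finally show ?thesis .
qed

lemma SUP_ennreal_greaterThanLessThan_0_1: "(SUP s\<in>{0<..<1::real}. ennreal s) = 1"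
proof -
  have "ennreal (Sup {0<..<1::real}) = (SUP s\<in>{0<..<1::real}. ennreal s)"
    by (rule continuous_at_Sup_mono)
      (auto simp: mono_def ennreal_leI intro: continuous_at_imp_continuous_within)
  then show ?thesis by simp
qed

lemma ennreal_mult_Inf:
  fixes c :: ennreal
  assumes "0 < c" "c < top"
  shows "c * Inf X = (INF x\<in>X. c * x)"
proof (cases "X = {}")
  case True
  then show ?thesis using assms by (simp add: ennreal_mult_top)
next
  case False
  have "mono ((*) c)" by (simp add: mono_def mult_left_mono)
  moreover have "continuous (at_right (Inf X)) ((*) c)"
    unfolding continuous_within using assms by (intro ennreal_tendsto_cmult tendsto_ident_at) simp
  ultimately show ?thesis using False by (rule continuous_at_Inf_mono) simp
qed

lemma Inf_ennreal_rescale: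
  assumes "0 < c"
  shows "ennreal c * Inf {ennreal m | m. 0 < m \<and> P (c * m)} = Inf {ennreal l | l. 0 < l \<and> P l}"
proof -
  have "(*) (ennreal c) ` {ennreal m | m. 0 < m \<and> P (c * m)} = {ennreal l | l. 0 < l \<and> P l}"
  proof (intro equalityI subsetI)
    fix y assume "y \<in> (*) (ennreal c) ` {ennreal m | m. 0 < m \<and> P (c * m)}"
    then obtain m where m: "y = ennreal c * ennreal m" "0 < m" "P (c * m)" by blast
    then have "y = ennreal (c * m)" using assms by (simp add: ennreal_mult)
    then show "y \<in> {ennreal l | l. 0 < l \<and> P l}" using m assms by (blast intro: mult_pos_pos)
  next
    fix y assume "y \<in> {ennreal l | l. 0 < l \<and> P l}"
    then obtain l where l: "y = ennreal l" "0 < l" "P l" by blast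
    have "y = ennreal (c * (l / c))" using l assms by simp
    also have "\<dots> = ennreal c * ennreal (l / c)" by (rule ennreal_mult') (use assms in simp)
    finally have "y = ennreal c * ennreal (l / c)" .
    moreover have "0 < l / c" "P (c * (l / c))" using l assms by simp_all
    ultimately show "y \<in> (*) (ennreal c) ` {ennreal m | m. 0 < m \<and> P (c * m)}" by blast
  qed
  then show ?thesis using assms by (simp add: ennreal_mult_Inf)
qed

lemma Inf_ennreal_Ball_upclosed:
  assumes upclosed: "\<And>i l l'. i \<in> I \<Longrightarrow> P i l \<Longrightarrow> 0 < l \<Longrightarrow> l \<le> l' \<Longrightarrow> P i l'"
  shows "Inf {ennreal l | l. 0 < l \<and> (\<forall>i\<in>I. P i l)} =
    (SUP i\<in>I. Inf {ennreal l | l. 0 < l \<and> P i l})"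
    (is "Inf ?All = (SUP i\<in>I. Inf (?One i))")
proof (rule antisym)
  show "(SUP i\<in>I. Inf (?One i)) \<le> Inf ?All"
    by (intro SUP_least Inf_superset_mono) auto
next
  show "Inf ?All \<le> (SUP i\<in>I. Inf (?One i))"
  proof (rule dense_ge)
    fix y assume y: "(SUP i\<in>I. Inf (?One i)) < y"
    show "Inf ?All \<le> y"
    proof (cases y)
      case (real x)
      have "0 < y" using y by (rule le_less_trans[OF zero_le])
      then have "0 < x" using real by simp
      have "P i x" if "i \<in> I" for i
      proof -
        have "Inf (?One i) < ennreal x" using y real that by (auto dest: SUP_lessD)
        then obtain l where "0 < l" "P i l" "ennreal l < ennreal x"
          unfolding Inf_less_iff by blast
        then show ?thesis using upclosed that by (auto simp: ennreal_less_iff)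
      qed
      then have "Inf ?All \<le> ennreal x" using \<open>0 < x\<close> by (intro Inf_lower) blast
      then show ?thesis using real by simp
    qed simp
  qed
qed

lemma orlicz_norm_on_indicator:
  assumes "\<Phi> 0 = 0" "E \<inter> B \<in> sets lebesgue"
  shows "orlicz_norm_on \<Phi> B (indicator E) = Inf {ennreal m | m. 0 < m \<and>
     ennreal (\<Phi> (1 / m)) * emeasure lebesgue (E \<inter> B) / emeasure lebesgue B \<le> 1}"
proof -
  have "(\<integral>\<^sup>+ x\<in>B. ennreal (\<Phi> (\<bar>indicator E x\<bar> / m)) \<partial>lebesgue)
      = (\<integral>\<^sup>+ x. ennreal (\<Phi> (1 / m)) * indicator (E \<inter> B) x \<partial>lebesgue)" for m :: real
    by (rule nn_integral_cong) (auto simp: indicator_def assms(1))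
  then show ?thesis
    unfolding orlicz_norm_on_def by (simp add: nn_integral_cmult_indicator[OF assms(2)])
qed

lemma orlicz_norm_on_zero:
  assumes "\<Phi> 0 = 0"
  shows "orlicz_norm_on \<Phi> B (\<lambda>_. 0) = 0"
proof -
  have "orlicz_norm_on \<Phi> B (\<lambda>_. 0) = Inf {ennreal m | m. 0 < m}"
    unfolding orlicz_norm_on_def by (simp add: assms)
  also have "\<dots> \<le> 0"
  proof (rule ennreal_le_epsilon)
    fix e :: real assume "0 < e"
    then have "Inf {ennreal m | m. 0 < m} \<le> ennreal e" by (intro Inf_lower) blast
    then show "Inf {ennreal m | m. 0 < m} \<le> 0 + ennreal e" by simp
  qed
  finally show ?thesis by simp
qed

lemma ennreal_mult_orlicz_norm_on_indicator:
  assumes "\<Phi> 0 = 0" "E \<inter> B \<in> sets lebesgue" "0 < s"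
  shows "ennreal s * orlicz_norm_on \<Phi> B (indicator E) = Inf {ennreal l | l. 0 < l \<and>
     ennreal (\<Phi> (s / l)) * emeasure lebesgue (E \<inter> B) / emeasure lebesgue B \<le> 1}"
proof -
  have "s \<noteq> 0" using \<open>0 < s\<close> by simp
  then show ?thesis
    using Inf_ennreal_rescale[OF \<open>0 < s\<close>,
        of "\<lambda>l. ennreal (\<Phi> (s / l)) * emeasure lebesgue (E \<inter> B) / emeasure lebesgue B \<le> 1"]
    by (simp add: orlicz_norm_on_indicator[of \<Phi>, OF assms(1,2)])
qed

lemma weak_orlicz_norm_on_eq_Inf_level_sets:
  "weak_orlicz_norm_on \<Phi> B f = Inf {ennreal l | l. 0 < l \<and> (\<forall>s\<in>{0<..}.
     ennreal (\<Phi> (s / l)) * emeasure lebesgue ({x. \<bar>f x\<bar> > s} \<inter> B) / emeasure lebesgue B \<le> 1)}"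
proof -
  have rescale: "(\<forall>t\<in>{0<..}. R t) \<longleftrightarrow> (\<forall>s\<in>{0<..}. R (s / l))"
    if "0 < l" for R :: "real \<Rightarrow> bool" and l :: real
  proof
    assume "\<forall>s\<in>{0<..}. R (s / l)"
    from this[rule_format, of "t * l" for t] show "\<forall>t\<in>{0<..}. R t" using that by simp
  qed (use that in simp)
  have distr_rescaled: "distr_m B (\<lambda>x. f x / l) (s / l) = emeasure lebesgue ({x. \<bar>f x\<bar> > s} \<inter> B)"
    if "0 < l" for l s
    using that unfolding distr_m_def
    by (intro arg_cong[where f = "emeasure lebesgue"])
      (auto simp: divide_strict_right_mono divide_less_cancel)
  have "(SUP t\<in>{0<..}. ennreal (\<Phi> t) * distr_m B (\<lambda>x. f x / l) t / emeasure lebesgue B) \<le> 1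
      \<longleftrightarrow> (\<forall>s\<in>{0<..}. ennreal (\<Phi> (s / l)) * emeasure lebesgue ({x. \<bar>f x\<bar> > s} \<inter> B)
        / emeasure lebesgue B \<le> 1)" if "0 < l" for l
    using rescale[OF that,
        of "\<lambda>t. ennreal (\<Phi> t) * distr_m B (\<lambda>x. f x / l) t / emeasure lebesgue B \<le> 1"]
    by (simp add: SUP_le_iff distr_rescaled[OF that])
  then show ?thesis
    unfolding weak_orlicz_norm_on_def by (intro arg_cong[where f = Inf]) blast
qed

lemma weak_orlicz_norm_on_eq_SUP_level_sets:
  assumes Y: "young_function \<Phi>" and B: "B \<in> sets lebesgue"
    and f: "f \<in> borel_measurable lebesgue"
  shows "weak_orlicz_norm_on \<Phi> B f =
    (SUP s\<in>{0<..}. ennreal s * orlicz_norm_on \<Phi> B (indicator {x. \<bar>f x\<bar> > s}))"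
proof -
  define Q where "Q s l \<longleftrightarrow>
    ennreal (\<Phi> (s / l)) * emeasure lebesgue ({x. \<bar>f x\<bar> > s} \<inter> B) / emeasure lebesgue B \<le> 1"
    for s l
  have level_sets: "{x. \<bar>f x\<bar> > s} \<inter> B \<in> sets lebesgue" for s
  proof -
    have "{x \<in> space lebesgue. \<bar>f x\<bar> > s} \<in> sets lebesgue" using f by measurable
    then show ?thesis using B by auto
  qed
  have Q_upclosed: "Q s l'" if "s \<in> {0<..}" "Q s l" "0 < l" "l \<le> l'" for s l l'
  proof -
    have "\<Phi> (s / l') \<le> \<Phi> (s / l)"
      using that by (intro young_function_mono[OF Y]) (auto simp: divide_left_mono)
    then show ?thesis
      using \<open>Q s l\<close> unfolding Q_def
      by (meson divide_right_mono_ennreal ennreal_leI mult_right_mono order_trans zero_le)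
  qed
  have "\<Phi> 0 = 0" using Y unfolding young_function_def by simp
  have "weak_orlicz_norm_on \<Phi> B f = Inf {ennreal l | l. 0 < l \<and> (\<forall>s\<in>{0<..}. Q s l)}"
    unfolding weak_orlicz_norm_on_eq_Inf_level_sets Q_def ..
  also have "\<dots> = (SUP s\<in>{0<..}. Inf {ennreal l | l. 0 < l \<and> Q s l})"
    by (rule Inf_ennreal_Ball_upclosed) (rule Q_upclosed)
  also have "\<dots> = (SUP s\<in>{0<..}. ennreal s * orlicz_norm_on \<Phi> B (indicator {x. \<bar>f x\<bar> > s}))"
    unfolding Q_def
    by (intro SUP_cong)
      (simp_all add: ennreal_mult_orlicz_norm_on_indicator[of \<Phi>, OF \<open>\<Phi> 0 = 0\<close> level_sets])
  finally show ?thesis .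
qed

lemma weak_orlicz_morrey_norm_eq_SUP_level_sets:
  fixes f :: "'a::euclidean_space \<Rightarrow> real"
  assumes Y: "young_function \<Phi>" and f: "f \<in> borel_measurable lebesgue"
  shows "weak_orlicz_morrey_norm \<Phi> \<phi> f =
    (SUP s\<in>{0<..}. ennreal s * orlicz_morrey_norm \<Phi> \<phi> (indicator {x. \<bar>f x\<bar> > s}))"
proof -
  let ?N = "\<lambda>s (a, r). orlicz_norm_on \<Phi> (ball a r) (indicator {x. \<bar>f x\<bar> > s} :: 'a \<Rightarrow> real)
    / ennreal (\<phi> r)"
  have "weak_orlicz_morrey_norm \<Phi> \<phi> f =
      (SUP p\<in>UNIV \<times> {0<..}. SUP s\<in>{0<..}. ennreal s * ?N s p)"
    unfolding weak_orlicz_morrey_norm_def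
    by (intro SUP_cong)
      (auto simp: weak_orlicz_norm_on_eq_SUP_level_sets[OF Y _ f] divide_ennreal_def
        SUP_mult_right_ennreal mult.assoc)
  also have "\<dots> = (SUP s\<in>{0<..}. SUP p\<in>UNIV \<times> {0<..}. ennreal s * ?N s p)"
    by (rule SUP_commute)
  also have "\<dots> = (SUP s\<in>{0<..}. ennreal s * orlicz_morrey_norm \<Phi> \<phi> (indicator {x. \<bar>f x\<bar> > s}))"
    unfolding orlicz_morrey_norm_def SUP_mult_left_ennreal by (simp add: case_prod_beta)
  finally show ?thesis .
qed

lemma weak_orlicz_morrey_norm_indicator:
  fixes A :: "'a::euclidean_space set"
  assumes Y: "young_function \<Phi>" and A: "A \<in> sets lebesgue"
  shows "weak_orlicz_morrey_norm \<Phi> \<phi> (indicator A :: 'a \<Rightarrow> real) =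
    orlicz_morrey_norm \<Phi> \<phi> (indicator A :: 'a \<Rightarrow> real)"
    (is "_ = ?M")
proof -
  have "\<Phi> 0 = 0" using Y unfolding young_function_def by simp
  moreover have "(indicator {} :: 'a \<Rightarrow> real) = (\<lambda>_. 0)" by (simp add: fun_eq_iff)
  ultimately have "orlicz_morrey_norm \<Phi> \<phi> (indicator {} :: 'a \<Rightarrow> real) = 0"
    unfolding orlicz_morrey_norm_def by (simp add: orlicz_norm_on_zero case_prod_beta)
  moreover have "{x. \<bar>indicator A x :: real\<bar> > s} = (if s < 1 then A else {})" if "0 < s" for s :: real
    using that by (auto simp: indicator_def)
  ultimately have "weak_orlicz_morrey_norm \<Phi> \<phi> (indicator A :: 'a \<Rightarrow> real) =
      (SUP s\<in>{0<..}. ennreal s * (if s < 1 then ?M else 0))"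
    unfolding weak_orlicz_morrey_norm_eq_SUP_level_sets[OF Y borel_measurable_indicator[OF A]]
    by (intro SUP_cong) auto
  also have "\<dots> = ?M"
  proof (rule antisym)
    show "(SUP s\<in>{0<..}. ennreal s * (if s < 1 then ?M else 0)) \<le> ?M"
    proof (rule SUP_least)
      fix s :: real
      have "ennreal s * ?M \<le> 1 * ?M" if "s < 1" using that by (intro mult_right_mono) simp_all
      then show "ennreal s * (if s < 1 then ?M else 0) \<le> ?M" by auto
    qed
  next
    have "?M = (SUP s\<in>{0<..<1::real}. ennreal s * ?M)"
      by (simp add: SUP_ennreal_greaterThanLessThan_0_1 flip: SUP_mult_right_ennreal)
    also have "\<dots> \<le> (SUP s\<in>{0<..}. ennreal s * (if s < 1 then ?M else 0))"
      by (rule SUP_mono) auto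
    finally show "?M \<le> (SUP s\<in>{0<..}. ennreal s * (if s < 1 then ?M else 0))" .
  qed
  finally show ?thesis .
qed

lemma weak_orlicz_morrey_norm_comp_le:
  fixes f :: "'a::euclidean_space \<Rightarrow> real" and \<psi> :: "'a \<Rightarrow> 'a"
  assumes Y: "young_function \<Phi>" and \<psi>: "\<psi> \<in> lebesgue \<rightarrow>\<^sub>M lebesgue"
    and f: "f \<in> borel_measurable lebesgue"
    and K: "\<And>A. A \<in> sets lebesgue \<Longrightarrow>
      orlicz_morrey_norm \<Phi> \<phi> (indicator (\<psi> -` A) :: 'a \<Rightarrow> real)
        \<le> ennreal K * orlicz_morrey_norm \<Phi> \<phi> (indicator A :: 'a \<Rightarrow> real)"
  shows "weak_orlicz_morrey_norm \<Phi> \<phi> (f \<circ> \<psi>) \<le> ennreal K * weak_orlicz_morrey_norm \<Phi> \<phi> f"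
proof -
  have level_sets: "{x. \<bar>f x\<bar> > s} \<in> sets lebesgue" for s
  proof -
    have "{x \<in> space lebesgue. \<bar>f x\<bar> > s} \<in> sets lebesgue" using f by measurable
    then show ?thesis by simp
  qed
  have "{x. \<bar>(f \<circ> \<psi>) x\<bar> > s} = \<psi> -` {x. \<bar>f x\<bar> > s}" for s by auto
  then have "weak_orlicz_morrey_norm \<Phi> \<phi> (f \<circ> \<psi>) =
      (SUP s\<in>{0<..}. ennreal s * orlicz_morrey_norm \<Phi> \<phi> (indicator (\<psi> -` {x. \<bar>f x\<bar> > s})))"
    by (simp add: weak_orlicz_morrey_norm_eq_SUP_level_sets[OF Y measurable_comp[OF \<psi> f]])
  also have "\<dots> \<le> (SUP s\<in>{0<..}.
      ennreal s * (ennreal K * orlicz_morrey_norm \<Phi> \<phi> (indicator {x. \<bar>f x\<bar> > s})))"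
    by (intro SUP_mono' mult_left_mono K level_sets) simp
  also have "\<dots> = ennreal K * weak_orlicz_morrey_norm \<Phi> \<phi> f"
    unfolding weak_orlicz_morrey_norm_eq_SUP_level_sets[OF Y f] SUP_mult_left_ennreal
    by (simp add: mult.left_commute)
  finally show ?thesis .
qed

lemma indicator_vimage_bound_if_comp_bounded_weak_OM:
  fixes \<psi> :: "'a::euclidean_space \<Rightarrow> 'a"
  assumes Y: "young_function \<Phi>" and \<psi>: "\<psi> \<in> lebesgue \<rightarrow>\<^sub>M lebesgue"
    and "comp_bounded_weak_OM \<Phi> \<phi> \<psi>"
  shows "\<exists>K>0. \<forall>A \<in> sets lebesgue.
    orlicz_morrey_norm \<Phi> \<phi> (indicator (\<psi> -` A) :: 'a \<Rightarrow> real)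
      \<le> ennreal K * orlicz_morrey_norm \<Phi> \<phi> (indicator A :: 'a \<Rightarrow> real)"
proof -
  obtain C where "C > 0" and C: "\<And>f. f \<in> weak_orlicz_morrey \<Phi> \<phi> \<Longrightarrow>
      weak_orlicz_morrey_norm \<Phi> \<phi> (f \<circ> \<psi>) \<le> ennreal C * weak_orlicz_morrey_norm \<Phi> \<phi> f"
    using assms(3) unfolding comp_bounded_weak_OM_def by blast
  have "orlicz_morrey_norm \<Phi> \<phi> (indicator (\<psi> -` A) :: 'a \<Rightarrow> real)
      \<le> ennreal C * orlicz_morrey_norm \<Phi> \<phi> (indicator A :: 'a \<Rightarrow> real)"
    if A: "A \<in> sets lebesgue" for A
  proof (cases "orlicz_morrey_norm \<Phi> \<phi> (indicator A :: 'a \<Rightarrow> real) = \<infinity>")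
    case False
    have "\<psi> -` A \<in> sets lebesgue" using measurable_sets[OF \<psi> A] by simp
    moreover have "indicator A \<circ> \<psi> = indicator (\<psi> -` A)" by (auto simp: indicator_def)
    moreover have "(indicator A :: 'a \<Rightarrow> real) \<in> weak_orlicz_morrey \<Phi> \<phi>"
      using A False
      by (simp add: weak_orlicz_morrey_def weak_orlicz_morrey_norm_indicator[OF Y] top.not_eq_extremum)
    ultimately show ?thesis
      using C by (metis weak_orlicz_morrey_norm_indicator[OF Y] A)
  qed (use \<open>C > 0\<close> in \<open>simp add: ennreal_mult_top\<close>)
  then show ?thesis using \<open>C > 0\<close> by blast
qed

lemma comp_bounded_weak_OM_if_indicator_vimage_bound:
  fixes \<psi> :: "'a::euclidean_space \<Rightarrow> 'a"
  assumes Y: "young_function \<Phi>" and \<psi>: "\<psi> \<in> lebesgue \<rightarrow>\<^sub>M lebesgue" and "K > 0"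
    and K: "\<forall>A \<in> sets lebesgue.
      orlicz_morrey_norm \<Phi> \<phi> (indicator (\<psi> -` A) :: 'a \<Rightarrow> real)
        \<le> ennreal K * orlicz_morrey_norm \<Phi> \<phi> (indicator A :: 'a \<Rightarrow> real)"
  shows "comp_bounded_weak_OM \<Phi> \<phi> \<psi>"
proof -
  have "f \<circ> \<psi> \<in> weak_orlicz_morrey \<Phi> \<phi> \<and>
      weak_orlicz_morrey_norm \<Phi> \<phi> (f \<circ> \<psi>) \<le> ennreal K * weak_orlicz_morrey_norm \<Phi> \<phi> f"
    if "f \<in> weak_orlicz_morrey \<Phi> \<phi>" for f
  proof -
    have f: "f \<in> borel_measurable lebesgue" and "weak_orlicz_morrey_norm \<Phi> \<phi> f < \<infinity>"
      using that unfolding weak_orlicz_morrey_def by auto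
    have le: "weak_orlicz_morrey_norm \<Phi> \<phi> (f \<circ> \<psi>) \<le> ennreal K * weak_orlicz_morrey_norm \<Phi> \<phi> f"
      using K by (intro weak_orlicz_morrey_norm_comp_le[OF Y \<psi> f]) blast
    also have "\<dots> < \<infinity>"
      using \<open>weak_orlicz_morrey_norm \<Phi> \<phi> f < \<infinity>\<close> by (simp add: ennreal_mult_less_top)
    finally show ?thesis
      using le measurable_comp[OF \<psi> f] by (simp add: weak_orlicz_morrey_def)
  qed
  then show ?thesis unfolding comp_bounded_weak_OM_def using \<open>K > 0\<close> by blast
qed

theorem theorem1p12:
  fixes \<Phi> \<phi> :: "real \<Rightarrow> real" and \<psi> :: "real ^ 'n \<Rightarrow> real ^ 'n"
  assumes "young_function \<Phi>" and "G_dec_1 \<phi>"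
    and "\<psi> \<in> lebesgue \<rightarrow>\<^sub>M lebesgue"
  shows "comp_bounded_weak_OM \<Phi> \<phi> \<psi> \<longleftrightarrow>
    (\<exists>K>0. \<forall>A \<in> sets lebesgue.
       orlicz_morrey_norm \<Phi> \<phi> (indicator (\<psi> -` A) :: real ^ 'n \<Rightarrow> real)
         \<le> ennreal K * orlicz_morrey_norm \<Phi> \<phi> (indicator A :: real ^ 'n \<Rightarrow> real))"
  using indicator_vimage_bound_if_comp_bounded_weak_OM[OF assms(1,3)]
    comp_bounded_weak_OM_if_indicator_vimage_bound[OF assms(1,3)]
  by blast

end
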